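(* Let $S$ be a finitely generated submonoid of $\mathbb N^d$ that has a Frobenius element $\mathbf f$ and is irreducible. Then (a) $S$ is maximal (with respect to inclusion) among all submonoids of $\mathbb N^d$ having $\mathbf f$ as a Frobenius element; (b) $S$ has a unique Frobenius element.
   Context: For a submonoid $T$ of $\mathbb N^d$, $\mathrm{pos}(T)$ is the set of finite nonnegative rational combinations of elements of $T$ and $\mathcal H(T)=(\mathrm{pos}(T)\setminus T)\cap\mathbb N^d$. A term order on $\mathbb N^d$ is a total order compatible with addition with $0$ least. $\mathbf f\in\mathcal H(T)$ is a Frobenius element of $T$ if $\mathbf f=\max_\prec\mathcal H(T)$ for some term order $\prec$. A submonoid of $\mathbb N^d$ is irreducible if it cannot be expressed as the intersection of two submonoids of $\mathbb N^d$ each containing it properly. *)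

theory Defs
  imports Complex_Main "HOL-Library.Function_Algebras"
begin

text \<open>Elements of N^d are functions from a finite index type 'd to nat;
  addition and 0 are pointwise (Function_Algebras).\<close>

definition submonoid :: "('d \<Rightarrow> nat) set \<Rightarrow> bool" where
  "submonoid T \<longleftrightarrow> 0 \<in> T \<and> (\<forall>x\<in>T. \<forall>y\<in>T. x + y \<in> T)"

definition finitely_generated :: "('d \<Rightarrow> nat) set \<Rightarrow> bool" where
  "finitely_generated T \<longleftrightarrow>
     (\<exists>G. finite G \<and> T = {x. \<exists>c :: ('d \<Rightarrow> nat) \<Rightarrow> nat. x = (\<lambda>i. \<Sum>g\<in>G. c g * g i)})"

definition pos :: "('d \<Rightarrow> nat) set \<Rightarrow> ('d \<Rightarrow> rat) set" where
  "pos T = {v. \<exists>F c. finite F \<and> F \<subseteq> T \<and> (\<forall>g\<in>F. c g \<ge> (0::rat)) \<and>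
                    v = (\<lambda>i. \<Sum>g\<in>F. c g * of_nat (g i))}"

definition holes :: "('d \<Rightarrow> nat) set \<Rightarrow> ('d \<Rightarrow> nat) set" where
  "holes T = {x. (\<lambda>i. of_nat (x i) :: rat) \<in> pos T \<and> x \<notin> T}"

definition term_order :: "(('d \<Rightarrow> nat) \<Rightarrow> ('d \<Rightarrow> nat) \<Rightarrow> bool) \<Rightarrow> bool" where
  "term_order le \<longleftrightarrow>
     (\<forall>a. le a a) \<and>
     (\<forall>a b. le a b \<and> le b a \<longrightarrow> a = b) \<and>
     (\<forall>a b c. le a b \<and> le b c \<longrightarrow> le a c) \<and>
     (\<forall>a b. le a b \<or> le b a) \<and>
     (\<forall>a b c. le a b \<longrightarrow> le (a + c) (b + c)) \<and>
     (\<forall>a. le 0 a)"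

definition frobenius_element :: "('d \<Rightarrow> nat) set \<Rightarrow> ('d \<Rightarrow> nat) \<Rightarrow> bool" where
  "frobenius_element T f \<longleftrightarrow>
     f \<in> holes T \<and> (\<exists>le. term_order le \<and> (\<forall>h\<in>holes T. le h f))"

definition irreducible_monoid :: "('d \<Rightarrow> nat) set \<Rightarrow> bool" where
  "irreducible_monoid S \<longleftrightarrow> submonoid S \<and>
     \<not> (\<exists>S1 S2. submonoid S1 \<and> submonoid S2 \<and> S \<subset> S1 \<and> S \<subset> S2 \<and> S = S1 \<inter> S2)"

end

theory Submission
  imports Defs
begin

text \<open>If \<open>f\<close> is a Frobenius element of \<open>S\<close> and \<open>s \<noteq> 0\<close> lies in \<open>pos S\<close>, then \<open>f + s\<close> also lies in
  \<open>pos S\<close> and is strictly larger than \<open>f\<close> in the term order; hence it is no hole, i.e. \<open>f + s \<in> S\<close>.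
  Consequently \<open>S \<union> {f}\<close> is again a submonoid. A submonoid \<open>T \<supset> S\<close> with Frobenius element \<open>f\<close>
  gives \<open>S = (S \<union> {f}) \<inter> T\<close>, and a second Frobenius element \<open>g \<noteq> f\<close> gives
  \<open>S = (S \<union> {f}) \<inter> (S \<union> {g})\<close>; both contradict irreducibility.\<close>

lemma pos_add:
  assumes "x \<in> pos T" "y \<in> pos T"
  shows "x + y \<in> pos T"
proof -
  obtain F1 c1 where F1: "finite F1" "F1 \<subseteq> T" "\<forall>g\<in>F1. c1 g \<ge> (0::rat)"
    and x: "x = (\<lambda>i. \<Sum>g\<in>F1. c1 g * of_nat (g i))" using assms(1) unfolding pos_def by blast
  obtain F2 c2 where F2: "finite F2" "F2 \<subseteq> T" "\<forall>g\<in>F2. c2 g \<ge> (0::rat)"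
    and y: "y = (\<lambda>i. \<Sum>g\<in>F2. c2 g * of_nat (g i))" using assms(2) unfolding pos_def by blast
  define c where "c g = (if g \<in> F1 then c1 g else 0) + (if g \<in> F2 then c2 g else 0)" for g
  have "(\<Sum>g\<in>F1 \<union> F2. (if g \<in> F then d g else 0) * of_nat (g i)) = (\<Sum>g\<in>F. d g * of_nat (g i))"
    if "F \<subseteq> F1 \<union> F2" for F and d :: "_ \<Rightarrow> rat" and i
  proof -
    have "(\<Sum>g\<in>F1 \<union> F2. (if g \<in> F then d g else 0) * of_nat (g i))
        = (\<Sum>g\<in>(F1 \<union> F2) \<inter> F. d g * of_nat (g i))"
      using F1(1) F2(1) by (auto simp: sum.inter_restrict intro!: sum.cong)
    then show ?thesis using that by (simp add: Int_absorb1)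
  qed
  then have "x + y = (\<lambda>i. \<Sum>g\<in>F1 \<union> F2. c g * of_nat (g i))"
    by (auto simp: x y c_def distrib_right sum.distrib)
  moreover have "\<forall>g\<in>F1 \<union> F2. c g \<ge> 0" using F1(3) F2(3) by (auto simp: c_def)
  ultimately show ?thesis using F1 F2 unfolding pos_def
    by (intro CollectI exI[of _ "F1 \<union> F2"] exI[of _ c] conjI) auto
qed

lemma of_nat_mem_pos:
  assumes "s \<in> T"
  shows "(\<lambda>i. of_nat (s i) :: rat) \<in> pos T"
proof -
  have "(\<lambda>i. of_nat (s i) :: rat) = (\<lambda>i. \<Sum>g\<in>{s}. 1 * of_nat (g i))" by simp
  then show ?thesis using assms unfolding pos_def
    by (intro CollectI exI[of _ "{s}"] exI[of _ "\<lambda>_. 1"] conjI) auto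
qed

lemma frobenius_element_not_mem: "frobenius_element T f \<Longrightarrow> f \<notin> T"
  by (simp add: frobenius_element_def holes_def)

lemma frobenius_element_add_mem:
  assumes F: "frobenius_element S f"
    and s: "(\<lambda>i. of_nat (s i) :: rat) \<in> pos S" "s \<noteq> 0"
  shows "f + s \<in> S"
proof (rule ccontr)
  assume "f + s \<notin> S"
  from F obtain le where "f \<in> holes S" and le: "term_order le" and max: "\<forall>h\<in>holes S. le h f"
    unfolding frobenius_element_def by blast
  have least: "\<And>a. le 0 a" and antisym: "\<And>a b. le a b \<Longrightarrow> le b a \<Longrightarrow> a = b"
    and mono: "\<And>a b c. le a b \<Longrightarrow> le (a + c) (b + c)"
    using le unfolding term_order_def by blast+
  have "(\<lambda>i. of_nat (f i) :: rat) \<in> pos S" using \<open>f \<in> holes S\<close> by (simp add: holes_def)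
  then have "(\<lambda>i. of_nat (f i)) + (\<lambda>i. of_nat (s i)) \<in> pos S" using s(1) by (rule pos_add)
  moreover have "(\<lambda>i. of_nat ((f + s) i) :: rat) = (\<lambda>i. of_nat (f i)) + (\<lambda>i. of_nat (s i))"
    by (simp add: fun_eq_iff)
  ultimately have "f + s \<in> holes S" using \<open>f + s \<notin> S\<close> by (simp add: holes_def)
  then have "le (f + s) f" using max by blast
  moreover have "le (0 + f) (s + f)" by (rule mono[OF least])
  then have "le f (f + s)" by (simp add: add.commute)
  ultimately have "f + s = f" by (rule antisym)
  with s(2) show False by simp
qed

lemma submonoid_insert_frobenius_element:
  assumes S: "submonoid S" and F: "frobenius_element S f"
  shows "submonoid (insert f S)"
proof -
  have "f \<notin> S" using F by (rule frobenius_element_not_mem)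
  then have "f \<noteq> 0" using S by (auto simp: submonoid_def)
  moreover have "(\<lambda>i. of_nat (f i) :: rat) \<in> pos S"
    using F by (simp add: frobenius_element_def holes_def)
  ultimately have "f + f \<in> S" using frobenius_element_add_mem[OF F] by blast
  moreover have "f + s \<in> S" "s + f \<in> S" if "s \<in> S" "s \<noteq> 0" for s
    using frobenius_element_add_mem[OF F of_nat_mem_pos[OF that(1)] that(2)] add.commute[of s f]
    by simp_all
  ultimately show ?thesis using S unfolding submonoid_def by auto
qed

lemma irreducible_monoid_inter:
  assumes "irreducible_monoid S" "submonoid S1" "submonoid S2" "S = S1 \<inter> S2"
  shows "S = S1 \<or> S = S2"
proof (rule ccontr)
  assume "\<not> (S = S1 \<or> S = S2)"
  with assms(4) have "S \<subset> S1" "S \<subset> S2" by auto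
  with assms show False unfolding irreducible_monoid_def by blast
qed

theorem proposition4p2:
  fixes S :: "('d::finite \<Rightarrow> nat) set" and f :: "'d \<Rightarrow> nat"
  assumes "submonoid S" and "finitely_generated S"
    and "frobenius_element S f" and "irreducible_monoid S"
  shows "(\<forall>T. submonoid T \<and> S \<subseteq> T \<and> frobenius_element T f \<longrightarrow> T = S)
         \<and> (\<forall>g. frobenius_element S g \<longrightarrow> g = f)"
proof -
  have Sf: "submonoid (insert f S)" "f \<notin> S"
    using assms(1,3) submonoid_insert_frobenius_element frobenius_element_not_mem by auto
  have "T = S" if T: "submonoid T" "S \<subseteq> T" "frobenius_element T f" for T
  proof -
    have "S = insert f S \<inter> T" using T frobenius_element_not_mem by blast
    then show "T = S" using irreducible_monoid_inter[OF assms(4) Sf(1) T(1)] Sf(2) by blast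
  qed
  moreover have "g = f" if g: "frobenius_element S g" for g
  proof -
    have "submonoid (insert g S)" "g \<notin> S"
      using assms(1) g submonoid_insert_frobenius_element frobenius_element_not_mem by auto
    then show "g = f" using irreducible_monoid_inter[OF assms(4) Sf(1)] Sf(2) by blast
  qed
  ultimately show ?thesis by blast
qed

end
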